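(* There is an absolute constant $C>0$ with the following property. Let $m\ge1$, $0\le k\le m$, and $\pi\in\mathcal P_{\le2}(m)$, and let $N^1_{k,\pi}(m)$ be the number of involutions $\sigma\in\mathrm{Sym}_m$ that preserve $\pi$ and have exactly $k$ fixed points. Then \[ N^1_{k,\pi}(m)\le C^m(m!)^{\frac12-\frac{\pi_2}{2m}-\frac k{4m}} . \]
   Context: $\mathcal P_{\le2}(m)$ is the set of set partitions of $\{1,\dots,m\}$ with all blocks of size at most $2$, and $\pi_2$ is the number of blocks of size $2$ of $\pi$. A permutation preserves $\pi$ if it maps each block of $\pi$ onto a block of $\pi$. Involutions are elements $\sigma$ with $\sigma^2=1$ (the identity included). *)

theory Defs
  imports Complex_Main "HOL-Library.Disjoint_Sets" "HOL-Combinatorics.Permutations"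
begin

definition partitions_le2 :: "nat \<Rightarrow> nat set set set" where
  "partitions_le2 m = {P. partition_on {1..m} P \<and> (\<forall>B\<in>P. card B \<le> 2)}"

definition pi2 :: "nat set set \<Rightarrow> nat" where
  "pi2 P = card {B\<in>P. card B = 2}"

definition preserves :: "(nat \<Rightarrow> nat) \<Rightarrow> nat set set \<Rightarrow> bool" where
  "preserves \<sigma> P \<longleftrightarrow> (\<forall>B\<in>P. \<sigma> ` B \<in> P)"

definition N1 :: "nat \<Rightarrow> nat set set \<Rightarrow> nat \<Rightarrow> nat" where
  "N1 k P m = card {\<sigma>. \<sigma> permutes {1..m} \<and> \<sigma> \<circ> \<sigma> = id \<and> preserves \<sigma> P
                     \<and> card {i\<in>{1..m}. \<sigma> i = i} = k}"

end

theory Submission imports Defs "HOL-Library.FuncSet" begin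

(*
  An involution sigma preserving P permutes the blocks of P, fixing some of them and exchanging the
  others in pairs. It is determined by its fixed points, the points it swaps inside their own
  block, and its value at one leader (the least element) of each exchanged pair of blocks: a
  bijection between two given blocks of size at most 2 is fixed by one value. If w pairs of
  blocks are exchanged, these 2w blocks contain no fixed point and each other block at most two,
  so 4w + k <= 2|P| = 2m - 2 pi_2. Counting the data gives N <= 8^m m^((2m - 2 pi_2 - k)/4),
  and m^m <= e^m m! turns this into the bound with C = 8e.
*)

definition block_of :: "'a set set \<Rightarrow> 'a \<Rightarrow> 'a set" where
  "block_of P x = (THE B. B \<in> P \<and> x \<in> B)"

lemma block_of_eq:
  assumes "partition_on A P" "B \<in> P" "x \<in> B"
  shows "block_of P x = B"
  unfolding block_of_def
proof (rule the_equality)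
  show "\<And>C. C \<in> P \<and> x \<in> C \<Longrightarrow> C = B"
    using assms unfolding partition_on_def disjoint_def by blast
qed (use assms in blast)

lemma block_of_in:
  assumes "partition_on A P" "x \<in> A"
  shows "block_of P x \<in> P" "x \<in> block_of P x"
proof -
  obtain B where "B \<in> P" "x \<in> B"
    using assms unfolding partition_on_def by blast
  then show "block_of P x \<in> P" "x \<in> block_of P x"
    using block_of_eq[OF assms(1)] by auto
qed

lemma block_of_subset:
  assumes "partition_on A P" "x \<in> A"
  shows "block_of P x \<subseteq> A"
  using block_of_in(1)[OF assms] partition_onD1[OF assms(1)] by blast

lemma block_of_image:
  assumes "partition_on A P" "preserves \<sigma> P" "x \<in> A"
  shows "block_of P (\<sigma> x) = \<sigma> ` block_of P x"
  using block_of_eq[OF assms(1)] block_of_in[OF assms(1,3)] assms(2)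
  unfolding preserves_def by blast

lemma preserves_in:
  assumes "partition_on A P" "preserves \<sigma> P" "x \<in> A"
  shows "\<sigma> x \<in> A"
  using block_of_in[OF assms(1,3)] assms(2) partition_onD1[OF assms(1)]
  unfolding preserves_def by blast

lemma card_le_2_other_unique:
  assumes "finite B" "card B \<le> 2" "a \<in> B" "b \<in> B" "c \<in> B" "b \<noteq> a" "c \<noteq> a"
  shows "b = c"
proof -
  have "card (B - {a}) \<le> Suc 0"
    using assms(1-3) by (simp add: card_Diff_singleton)
  then show ?thesis
    using card_le_Suc0_iff_eq[of "B - {a}"] assms by blast
qed

lemma agree_on_card_le_2:
  assumes "finite B" "card B \<le> 2" "inj_on f B" "inj_on g B" "f ` B = g ` B"
    and "x \<in> B" "f x = g x" "y \<in> B"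
  shows "f y = g y"
proof (cases "y = x")
  case False
  have "card (f ` B) \<le> 2"
    using assms(1,2) card_image_le order_trans by blast
  moreover have "f y \<noteq> f x" "g y \<noteq> f x"
    using False assms(3,4,6-8) by (metis inj_onD)+
  ultimately show ?thesis
    using card_le_2_other_unique[of "f ` B" "f x"] assms(1,5,6,8) by blast
qed (use assms(7) in simp)

lemma card_partition_le_2:
  assumes "partition_on A P" "finite A" "\<forall>B\<in>P. card B \<le> 2"
  shows "card A = card P + card {B\<in>P. card B = 2}"
proof -
  have block_card: "card B = 1 + (if card B = 2 then 1 else 0)" if "B \<in> P" for B
  proof -
    have "B \<noteq> {}" "finite B"
      using assms that unfolding partition_on_def by (auto intro: finite_subset)
    then have "0 < card B"
      by (simp add: card_gt_0_iff)
    then show ?thesis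
      using assms(3) that by auto
  qed
  have "card A = (\<Sum>B\<in>P. card B)"
    using sum.partition[OF assms(2,1), of "\<lambda>_. 1::nat"] by simp
  also have "\<dots> = (\<Sum>B\<in>P. 1 + (if card B = 2 then 1 else 0))"
    using block_card by (rule sum.cong[OF refl])
  also have "\<dots> = card P + card {B\<in>P. card B = 2}"
    using finite_elements[OF assms(2,1)] by (simp only: sum.distrib) (simp add: sum.If_cases Int_def)
  finally show ?thesis .
qed

lemma card_fixpoints_le:
  assumes P: "partition_on A P" and "finite A" "\<forall>B\<in>P. card B \<le> 2" and pres: "preserves \<sigma> P"
  shows "card {x\<in>A. \<sigma> x = x} \<le> 2 * card {B\<in>P. \<sigma> ` B = B}"
proof -
  let ?stable = "{B\<in>P. \<sigma> ` B = B}"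
  have "{x\<in>A. \<sigma> x = x} \<subseteq> \<Union>?stable"
  proof
    fix x assume "x \<in> {x\<in>A. \<sigma> x = x}"
    then have "x \<in> A" "\<sigma> x = x"
      by auto
    then have "\<sigma> ` block_of P x = block_of P x"
      using block_of_image[OF P pres \<open>x \<in> A\<close>, symmetric] by simp
    then show "x \<in> \<Union>?stable"
      using block_of_in[OF P \<open>x \<in> A\<close>] by blast
  qed
  moreover have "finite (\<Union>?stable)"
    by (rule finite_subset[OF _ \<open>finite A\<close>]) (use partition_onD1[OF P] in blast)
  ultimately have "card {x\<in>A. \<sigma> x = x} \<le> card (\<Union>?stable)"
    by (rule card_mono[rotated])
  also have "\<dots> \<le> (\<Sum>B\<in>?stable. card B)"
    by (rule card_Union_le_sum_card)
  also have "\<dots> \<le> (\<Sum>B\<in>?stable. 2)"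
    using assms(3) by (intro sum_mono) auto
  finally show ?thesis
    by simp
qed

lemma swapped_block_pair:
  assumes P: "partition_on A P" and inv: "\<And>x. \<sigma> (\<sigma> x) = x" and pres: "preserves \<sigma> P"
    and "x \<in> A" and u: "u \<in> block_of P x \<union> block_of P (\<sigma> x)"
  shows "{block_of P u, block_of P (\<sigma> u)} = {block_of P x, block_of P (\<sigma> x)}"
proof -
  have "\<sigma> x \<in> A"
    using preserves_in[OF P pres \<open>x \<in> A\<close>] .
  show ?thesis
  proof (cases "u \<in> block_of P x")
    case True
    then have "block_of P u = block_of P x" "u \<in> A"
      using block_of_eq[OF P block_of_in(1)[OF P \<open>x \<in> A\<close>]] block_of_subset[OF P \<open>x \<in> A\<close>]
      by auto
    then show ?thesis
      using block_of_image[OF P pres] \<open>x \<in> A\<close> by simp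
  next
    case False
    then have "block_of P u = block_of P (\<sigma> x)" "u \<in> A"
      using u block_of_eq[OF P block_of_in(1)[OF P \<open>\<sigma> x \<in> A\<close>]]
        block_of_subset[OF P \<open>\<sigma> x \<in> A\<close>] by auto
    moreover from this have "block_of P (\<sigma> u) = block_of P x"
      using block_of_image[OF P pres] \<open>\<sigma> x \<in> A\<close> inv by (metis (no_types))
    ultimately show ?thesis
      by blast
  qed
qed

definition swap_leaders :: "'a set set \<Rightarrow> ('a \<Rightarrow> 'a) \<Rightarrow> 'a set \<Rightarrow> 'a::linorder set" where
  "swap_leaders P \<sigma> A =
     {x\<in>A. \<sigma> x \<notin> block_of P x \<and> (\<forall>y \<in> block_of P x \<union> block_of P (\<sigma> x). x \<le> y)}"

lemma swap_leaders_unique: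
  assumes P: "partition_on A P" and inv: "\<And>x. \<sigma> (\<sigma> x) = x" and pres: "preserves \<sigma> P"
    and w: "w \<in> swap_leaders P \<sigma> A" and w': "w' \<in> swap_leaders P \<sigma> A"
    and "w \<in> block_of P w' \<union> block_of P (\<sigma> w')"
  shows "w = w'"
proof -
  have "w' \<in> A"
    using w' unfolding swap_leaders_def by blast
  have "w' \<le> w"
    using w' \<open>w \<in> block_of P w' \<union> block_of P (\<sigma> w')\<close> unfolding swap_leaders_def by blast
  moreover have "block_of P w \<union> block_of P (\<sigma> w) = block_of P w' \<union> block_of P (\<sigma> w')"
    using arg_cong[OF swapped_block_pair[OF P inv pres \<open>w' \<in> A\<close> assms(6)], of Union] by simp
  then have "w \<le> w'"
    using w block_of_in(2)[OF P \<open>w' \<in> A\<close>] unfolding swap_leaders_def by blast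
  ultimately show ?thesis
    by simp
qed

lemma card_swap_leaders_le:
  assumes P: "partition_on A P" and "finite A"
    and inv: "\<And>x. \<sigma> (\<sigma> x) = x" and pres: "preserves \<sigma> P"
  shows "2 * card (swap_leaders P \<sigma> A) \<le> card {B\<in>P. \<sigma> ` B \<noteq> B}"
proof -
  define W where "W = swap_leaders P \<sigma> A"
  have W: "w \<in> A" "\<sigma> w \<in> A" "\<sigma> w \<notin> block_of P w" if "w \<in> W" for w
    using that preserves_in[OF P pres] unfolding W_def swap_leaders_def by auto
  have unique: "w = w'" if "w \<in> W" "w' \<in> W" "w \<in> block_of P w' \<union> block_of P (\<sigma> w')" for w w'
    using swap_leaders_unique[OF P inv pres] that unfolding W_def by blast
  have image_back: "\<sigma> ` block_of P (\<sigma> x) = block_of P x" if "x \<in> A" for x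
    using block_of_image[OF P pres preserves_in[OF P pres that]] inv by simp
  have blocks_differ: "block_of P w \<noteq> block_of P (\<sigma> w)" if "w \<in> W" for w
    using W[OF that] block_of_in(2)[OF P] by metis
  have inj_first: "inj_on (block_of P) W"
    by (rule inj_onI) (use unique W(1) block_of_in(2)[OF P] in blast)
  have inj_second: "inj_on (\<lambda>w. block_of P (\<sigma> w)) W"
  proof (rule inj_onI)
    fix w w' assume w: "w \<in> W" "w' \<in> W" "block_of P (\<sigma> w) = block_of P (\<sigma> w')"
    then have "block_of P w = block_of P w'"
      using image_back W(1) by metis
    then show "w = w'"
      by (rule inj_onD[OF inj_first _ w(1,2)])
  qed
  have disjoint: "block_of P ` W \<inter> (\<lambda>w. block_of P (\<sigma> w)) ` W = {}"
  proof (rule ccontr)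
    assume "block_of P ` W \<inter> (\<lambda>w. block_of P (\<sigma> w)) ` W \<noteq> {}"
    then obtain w w' where w: "w \<in> W" "w' \<in> W" and eq: "block_of P w = block_of P (\<sigma> w')"
      by auto
    then have "w = w'"
      using unique block_of_in(2)[OF P W(1)[OF w(1)]] by simp
    then show False
      using blocks_differ[OF w(1)] eq by simp
  qed
  have "block_of P w \<in> {B\<in>P. \<sigma> ` B \<noteq> B}" "block_of P (\<sigma> w) \<in> {B\<in>P. \<sigma> ` B \<noteq> B}"
    if "w \<in> W" for w
    using W[OF that] blocks_differ[OF that] image_back block_of_image[OF P pres] block_of_in(1)[OF P]
    by (metis (mono_tags, lifting) mem_Collect_eq)+
  then have moved: "block_of P ` W \<union> (\<lambda>w. block_of P (\<sigma> w)) ` W \<subseteq> {B\<in>P. \<sigma> ` B \<noteq> B}"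
    by blast
  have "finite W"
    using \<open>finite A\<close> unfolding W_def swap_leaders_def by simp
  then have "2 * card W = card (block_of P ` W \<union> (\<lambda>w. block_of P (\<sigma> w)) ` W)"
    using card_Un_disjoint[OF _ _ disjoint] card_image[OF inj_first] card_image[OF inj_second]
    by simp
  also have "\<dots> \<le> card {B\<in>P. \<sigma> ` B \<noteq> B}"
    using moved finite_elements[OF \<open>finite A\<close> P] by (intro card_mono) auto
  finally show ?thesis
    unfolding W_def .
qed

lemma card_swap_leaders_fixpoints_le:
  assumes P: "partition_on A P" and "finite A" "\<forall>B\<in>P. card B \<le> 2"
    and "\<And>x. \<sigma> (\<sigma> x) = x" "preserves \<sigma> P"
  shows "4 * card (swap_leaders P \<sigma> A) + card {x\<in>A. \<sigma> x = x} + 2 * card {B\<in>P. card B = 2}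
           \<le> 2 * card A"
proof -
  have "card P = card {B\<in>P. \<sigma> ` B = B} + card {B\<in>P. \<sigma> ` B \<noteq> B}"
    using finite_elements[OF \<open>finite A\<close> P]
    by (subst card_Un_disjoint[symmetric]) (auto intro: arg_cong[where f = card])
  then show ?thesis
    using card_partition_le_2[OF assms(1-3)] card_fixpoints_le[OF assms(1-3,5)]
      card_swap_leaders_le[OF assms(1,2,4,5)] by linarith
qed

lemma exchanged_blocks_have_leader:
  assumes P: "partition_on A P" and "finite A"
    and inv: "\<And>x. \<sigma> (\<sigma> x) = x" and pres: "preserves \<sigma> P"
    and "y \<in> A" and moved: "\<sigma> y \<notin> block_of P y"
  obtains u where "u \<in> swap_leaders P \<sigma> A" "u \<in> block_of P y \<union> block_of P (\<sigma> y)"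
proof -
  let ?pair = "block_of P y \<union> block_of P (\<sigma> y)"
  have "\<sigma> y \<in> A"
    using preserves_in[OF P pres \<open>y \<in> A\<close>] .
  have "?pair \<subseteq> A"
    using block_of_subset[OF P] \<open>y \<in> A\<close> \<open>\<sigma> y \<in> A\<close> by blast
  then have "finite ?pair"
    using \<open>finite A\<close> by (rule finite_subset)
  define u where "u = Min ?pair"
  have u: "u \<in> ?pair"
    unfolding u_def using \<open>finite ?pair\<close> block_of_in(2)[OF P \<open>y \<in> A\<close>] by (intro Min_in) auto
  have pair: "{block_of P u, block_of P (\<sigma> u)} = {block_of P y, block_of P (\<sigma> y)}"
    using swapped_block_pair[OF P inv pres \<open>y \<in> A\<close> u] .
  have "u \<in> A"
    using u \<open>?pair \<subseteq> A\<close> by blast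
  have "\<sigma> u \<notin> block_of P u"
  proof
    assume "\<sigma> u \<in> block_of P u"
    then have "block_of P (\<sigma> u) = block_of P u"
      using block_of_eq[OF P block_of_in(1)[OF P \<open>u \<in> A\<close>]] by simp
    then show False
      using pair moved block_of_in(2)[OF P \<open>\<sigma> y \<in> A\<close>] by (metis doubleton_eq_iff)
  qed
  moreover have "block_of P u \<union> block_of P (\<sigma> u) = ?pair"
    using arg_cong[OF pair, of Union] by simp
  then have "\<forall>z \<in> block_of P u \<union> block_of P (\<sigma> u). u \<le> z"
    using \<open>finite ?pair\<close> unfolding u_def by simp
  ultimately have "u \<in> swap_leaders P \<sigma> A"
    unfolding swap_leaders_def using \<open>u \<in> A\<close> by blast
  then show ?thesis
    using u by (rule that)
qed

lemma eq_on_exchanged_block: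
  assumes P: "partition_on A P" and "finite A" and small: "\<forall>B\<in>P. card B \<le> 2"
    and \<sigma>: "\<And>x. \<sigma> (\<sigma> x) = x" "preserves \<sigma> P"
    and \<tau>: "\<And>x. \<tau> (\<tau> x) = x" "preserves \<tau> P"
    and leaders: "\<And>x. x \<in> swap_leaders P \<sigma> A \<Longrightarrow> \<sigma> x = \<tau> x"
    and "y \<in> A" and moved: "\<sigma> y \<notin> block_of P y"
  shows "\<sigma> y = \<tau> y"
proof -
  obtain u where leader: "u \<in> swap_leaders P \<sigma> A" and u: "u \<in> block_of P y \<union> block_of P (\<sigma> y)"
    using exchanged_blocks_have_leader[OF P \<open>finite A\<close> \<sigma> \<open>y \<in> A\<close> moved] .
  have "\<sigma> u = \<tau> u"
    using leaders[OF leader] .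
  have "u \<in> A"
    using leader unfolding swap_leaders_def by blast
  have "\<sigma> y \<in> A"
    using preserves_in[OF P \<sigma>(2) \<open>y \<in> A\<close>] .
  let ?C = "block_of P u"
  have agree: "\<sigma> z = \<tau> z" if "z \<in> ?C" for z
  proof (rule agree_on_card_le_2[where f = \<sigma> and g = \<tau> and x = u])
    show "u \<in> ?C" "z \<in> ?C" "\<sigma> u = \<tau> u"
      using block_of_in(2)[OF P \<open>u \<in> A\<close>] that \<open>\<sigma> u = \<tau> u\<close> by simp_all
    show "finite ?C" "card ?C \<le> 2"
      using finite_subset[OF block_of_subset[OF P \<open>u \<in> A\<close>] \<open>finite A\<close>]
        small block_of_in(1)[OF P \<open>u \<in> A\<close>] by simp_all
    show "inj_on \<sigma> ?C" "inj_on \<tau> ?C"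
      using \<sigma>(1) \<tau>(1) by (metis inj_on_inverseI)+
    show "\<sigma> ` ?C = \<tau> ` ?C"
      using block_of_image[OF P _ \<open>u \<in> A\<close>] \<sigma>(2) \<tau>(2) \<open>\<sigma> u = \<tau> u\<close> by metis
  qed
  show ?thesis
  proof (cases "y \<in> ?C")
    case False
    then have "?C = block_of P (\<sigma> y)"
      using swapped_block_pair[OF P \<sigma> \<open>y \<in> A\<close> u] block_of_in(2)[OF P \<open>y \<in> A\<close>]
      by (metis doubleton_eq_iff)
    then have "\<tau> (\<sigma> y) = y"
      using agree[of "\<sigma> y"] block_of_in(2)[OF P \<open>\<sigma> y \<in> A\<close>] \<sigma>(1) by simp
    then show ?thesis
      using \<tau>(1) by metis
  qed (use agree in blast)
qed

lemma involution_eqI: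
  assumes P: "partition_on A P" and "finite A" and small: "\<forall>B\<in>P. card B \<le> 2"
    and \<sigma>: "\<sigma> permutes A" "\<And>x. \<sigma> (\<sigma> x) = x" "preserves \<sigma> P"
    and \<tau>: "\<tau> permutes A" "\<And>x. \<tau> (\<tau> x) = x" "preserves \<tau> P"
    and fixpoints: "\<And>x. x \<in> A \<Longrightarrow> \<sigma> x = x \<Longrightarrow> \<tau> x = x"
    and swaps: "\<And>x. x \<in> A \<Longrightarrow> \<sigma> x \<noteq> x \<Longrightarrow> \<sigma> x \<in> block_of P x
                  \<Longrightarrow> \<tau> x \<noteq> x \<and> \<tau> x \<in> block_of P x"
    and leaders: "\<And>x. x \<in> swap_leaders P \<sigma> A \<Longrightarrow> \<sigma> x = \<tau> x"
  shows "\<sigma> = \<tau>"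
proof
  fix y
  show "\<sigma> y = \<tau> y"
  proof (cases "y \<in> A")
    case False
    then show ?thesis
      using \<sigma>(1) \<tau>(1) by (simp add: permutes_not_in)
  next
    case True
    let ?B = "block_of P y"
    have "finite ?B" "card ?B \<le> 2"
      using finite_subset[OF block_of_subset[OF P True] \<open>finite A\<close>]
        small block_of_in(1)[OF P True] by simp_all
    then show ?thesis
      using fixpoints[OF True] swaps[OF True] block_of_in(2)[OF P True]
        eq_on_exchanged_block[OF P \<open>finite A\<close> small \<sigma>(2,3) \<tau>(2,3) leaders True]
        card_le_2_other_unique[of ?B y "\<sigma> y" "\<tau> y"] by metis
  qed
qed

lemma card_Sigma_PiE_small_subsets_le:
  assumes "finite A" "A \<noteq> {}"
  shows "real (card (Sigma {W. W \<subseteq> A \<and> real (card W) \<le> r} (\<lambda>W. PiE W (\<lambda>_. A))))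
           \<le> 2 ^ card A * real (card A) powr r"
proof -
  let ?small = "{W. W \<subseteq> A \<and> real (card W) \<le> r}"
  have "?small \<subseteq> Pow A"
    by blast
  then have "finite ?small" "card ?small \<le> 2 ^ card A"
    using \<open>finite A\<close> card_mono[of "Pow A" ?small] by (auto simp: card_Pow intro: finite_subset)
  have "1 \<le> real (card A)"
    using assms by (simp add: Suc_leI card_gt_0_iff)
  have "card (Sigma ?small (\<lambda>W. PiE W (\<lambda>_. A))) = (\<Sum>W\<in>?small. card (PiE W (\<lambda>_. A)))"
    using \<open>finite ?small\<close> \<open>finite A\<close> by (intro card_SigmaI) (auto intro!: finite_PiE intro: finite_subset)
  also have "\<dots> = (\<Sum>W\<in>?small. card A ^ card W)"
  proof (rule sum.cong[OF refl])
    fix W assume "W \<in> ?small"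
    then have "finite W"
      using \<open>finite A\<close> finite_subset by blast
    then show "card (PiE W (\<lambda>_. A)) = card A ^ card W"
      by (simp add: card_PiE)
  qed
  finally have "real (card (Sigma ?small (\<lambda>W. PiE W (\<lambda>_. A)))) = (\<Sum>W\<in>?small. real (card A) ^ card W)"
    by simp
  also have "\<dots> \<le> (\<Sum>W\<in>?small. real (card A) powr r)"
  proof (rule sum_mono)
    fix W assume "W \<in> ?small"
    then have "real (card A) powr real (card W) \<le> real (card A) powr r"
      using \<open>1 \<le> real (card A)\<close> by (intro powr_mono) auto
    then show "real (card A) ^ card W \<le> real (card A) powr r"
      using \<open>1 \<le> real (card A)\<close> by (simp add: powr_realpow)
  qed
  also have "\<dots> \<le> 2 ^ card A * real (card A) powr r"
    using \<open>card ?small \<le> 2 ^ card A\<close> by (simp add: mult_right_mono flip: of_nat_power)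
  finally show ?thesis .
qed

lemma power_self_le_exp_fact: "real n ^ n \<le> exp (real n) * fact n"
proof -
  have sums: "(\<lambda>i. real n ^ i / fact i) sums exp (real n)"
    using exp_converges[of "real n"] by (simp add: divide_inverse mult.commute)
  have "(\<Sum>i\<in>{n}. real n ^ i / fact i) \<le> (\<Sum>i. real n ^ i / fact i)"
    using sums_summable[OF sums] by (rule sum_le_suminf) auto
  then have "real n ^ n / fact n \<le> exp (real n)"
    using sums_unique[OF sums] by simp
  then show ?thesis
    by (simp add: divide_le_eq mult.commute)
qed

lemma powr_mult_le_exp_fact:
  assumes "0 \<le> e" "e \<le> 1"
  shows "real n powr (real n * e) \<le> exp (real n) * fact n powr e"
proof (cases "n = 0")
  case False
  have "real n powr (real n * e) = (real n ^ n) powr e"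
    using False by (simp add: powr_powr[symmetric] powr_realpow)
  also have "\<dots> \<le> (exp (real n) * fact n) powr e"
    using power_self_le_exp_fact assms(1) by (intro powr_mono2) auto
  also have "\<dots> = exp (real n * e) * fact n powr e"
    by (simp add: powr_mult exp_powr_real)
  also have "\<dots> \<le> exp (real n) * fact n powr e"
    using assms by (intro mult_right_mono) (auto simp: mult_left_le)
  finally show ?thesis .
qed simp

definition involution_code ::
    "nat set set \<Rightarrow> nat set \<Rightarrow> (nat \<Rightarrow> nat) \<Rightarrow> nat set \<times> nat set \<times> nat set \<times> (nat \<Rightarrow> nat)" where
  "involution_code P A \<sigma> =
    ({x\<in>A. \<sigma> x = x}, {x\<in>A. \<sigma> x \<noteq> x \<and> \<sigma> x \<in> block_of P x},
     swap_leaders P \<sigma> A, restrict \<sigma> (swap_leaders P \<sigma> A))"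

lemma inj_on_involution_code:
  assumes P: "partition_on A P" and "finite A" and small: "\<forall>B\<in>P. card B \<le> 2"
  shows "inj_on (involution_code P A) {\<sigma>. \<sigma> permutes A \<and> \<sigma> \<circ> \<sigma> = id \<and> preserves \<sigma> P}"
proof (rule inj_onI)
  fix \<sigma> \<tau>
  assume "\<sigma> \<in> {\<sigma>. \<sigma> permutes A \<and> \<sigma> \<circ> \<sigma> = id \<and> preserves \<sigma> P}"
    and "\<tau> \<in> {\<sigma>. \<sigma> permutes A \<and> \<sigma> \<circ> \<sigma> = id \<and> preserves \<sigma> P}"
  then have \<sigma>: "\<sigma> permutes A" "\<And>x. \<sigma> (\<sigma> x) = x" "preserves \<sigma> P"
    and \<tau>: "\<tau> permutes A" "\<And>x. \<tau> (\<tau> x) = x" "preserves \<tau> P"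
    by (auto simp: fun_eq_iff)
  assume "involution_code P A \<sigma> = involution_code P A \<tau>"
  then have fixpoints: "{x\<in>A. \<sigma> x = x} = {x\<in>A. \<tau> x = x}"
    and swaps: "{x\<in>A. \<sigma> x \<noteq> x \<and> \<sigma> x \<in> block_of P x} = {x\<in>A. \<tau> x \<noteq> x \<and> \<tau> x \<in> block_of P x}"
    and leaders: "swap_leaders P \<sigma> A = swap_leaders P \<tau> A"
    and leader_values: "restrict \<sigma> (swap_leaders P \<sigma> A) = restrict \<tau> (swap_leaders P \<tau> A)"
    unfolding involution_code_def prod.inject by blast+
  show "\<sigma> = \<tau>"
  proof (rule involution_eqI[OF P \<open>finite A\<close> small \<sigma> \<tau>])
    show "\<tau> x = x" if "x \<in> A" "\<sigma> x = x" for x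
      using that fixpoints by blast
    show "\<tau> x \<noteq> x \<and> \<tau> x \<in> block_of P x" if "x \<in> A" "\<sigma> x \<noteq> x" "\<sigma> x \<in> block_of P x" for x
      using that swaps by blast
    show "\<sigma> x = \<tau> x" if "x \<in> swap_leaders P \<sigma> A" for x
      using fun_cong[OF leader_values, of x] that leaders by simp
  qed
qed

lemma card_preserving_involutions_le:
  assumes P: "partition_on A P" and "finite A" "A \<noteq> {}" and small: "\<forall>B\<in>P. card B \<le> 2"
  shows "real (card {\<sigma>. \<sigma> permutes A \<and> \<sigma> \<circ> \<sigma> = id \<and> preserves \<sigma> P \<and> card {i\<in>A. \<sigma> i = i} = k})
           \<le> 8 ^ card A * real (card A) powr
               ((2 * real (card A) - 2 * real (card {B\<in>P. card B = 2}) - real k) / 4)"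
    (is "real (card ?S) \<le> _ * _ powr ?r")
proof -
  let ?leader_data = "Sigma {W. W \<subseteq> A \<and> real (card W) \<le> ?r} (\<lambda>W. PiE W (\<lambda>_. A))"
  have "inj_on (involution_code P A) ?S"
    using inj_on_involution_code[OF P \<open>finite A\<close> small] by (rule inj_on_subset) blast
  moreover have "involution_code P A ` ?S \<subseteq> Pow A \<times> Pow A \<times> ?leader_data"
  proof (rule image_subsetI)
    fix \<sigma> assume "\<sigma> \<in> ?S"
    then have \<sigma>: "\<sigma> permutes A" "\<And>x. \<sigma> (\<sigma> x) = x" "preserves \<sigma> P" "card {x\<in>A. \<sigma> x = x} = k"
      by (auto simp: fun_eq_iff)
    have "4 * card (swap_leaders P \<sigma> A) + k + 2 * card {B\<in>P. card B = 2} \<le> 2 * card A"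
      using card_swap_leaders_fixpoints_le[OF P \<open>finite A\<close> small \<sigma>(2,3)] \<sigma>(4) by simp
    then have "real (card (swap_leaders P \<sigma> A)) \<le> ?r"
      by simp
    moreover have "restrict \<sigma> (swap_leaders P \<sigma> A) \<in> PiE (swap_leaders P \<sigma> A) (\<lambda>_. A)"
      using \<sigma>(1) by (auto simp: swap_leaders_def permutes_in_image)
    ultimately show "involution_code P A \<sigma> \<in> Pow A \<times> Pow A \<times> ?leader_data"
      unfolding involution_code_def swap_leaders_def by auto
  qed
  moreover have "finite ?leader_data"
    using \<open>finite A\<close> by (auto intro!: finite_SigmaI finite_PiE intro: finite_subset)
  ultimately have "card ?S \<le> 2 ^ card A * 2 ^ card A * card ?leader_data"
    using card_mono[of "Pow A \<times> Pow A \<times> ?leader_data" "involution_code P A ` ?S"] \<open>finite A\<close>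
    by (simp add: card_image card_cartesian_product card_Pow)
  then have "real (card ?S) \<le> real (2 ^ card A * 2 ^ card A * card ?leader_data)"
    by (rule of_nat_mono)
  also have "\<dots> = 2 ^ card A * 2 ^ card A * real (card ?leader_data)"
    by simp
  also have "\<dots> \<le> 2 ^ card A * 2 ^ card A * (2 ^ card A * real (card A) powr ?r)"
    using card_Sigma_PiE_small_subsets_le[OF \<open>finite A\<close> \<open>A \<noteq> {}\<close>, of ?r]
    by (intro mult_left_mono) simp_all
  also have "\<dots> = 8 ^ card A * real (card A) powr ?r"
    by (simp add: power_mult_distrib[symmetric])
  finally show ?thesis .
qed

lemma card_preserving_involutions_le_fact:
  assumes P: "partition_on A P" and "finite A" "A \<noteq> {}" and small: "\<forall>B\<in>P. card B \<le> 2"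
    and "k \<le> card A"
  defines "n \<equiv> card A" and "p \<equiv> card {B\<in>P. card B = 2}"
  shows "real (card {\<sigma>. \<sigma> permutes A \<and> \<sigma> \<circ> \<sigma> = id \<and> preserves \<sigma> P \<and> card {i\<in>A. \<sigma> i = i} = k})
           \<le> (8 * exp 1) ^ n * fact n powr (1/2 - real p / (2 * real n) - real k / (4 * real n))"
    (is "real (card ?S) \<le> _ * _ powr ?e")
proof -
  have "1 \<le> n"
    using assms(2,3) unfolding n_def by (simp add: Suc_leI card_gt_0_iff)
  have "p \<le> card P"
    unfolding p_def using finite_elements[OF \<open>finite A\<close> P] by (intro card_mono) auto
  then have "2 * p \<le> n"
    using card_partition_le_2[OF P \<open>finite A\<close> small] unfolding n_def p_def by simp
  have exponent: "real n * ?e = (2 * real n - 2 * real p - real k) / 4"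
    using \<open>1 \<le> n\<close> by (simp add: field_simps)
  then have "0 \<le> real n * ?e"
    using \<open>2 * p \<le> n\<close> \<open>k \<le> card A\<close> unfolding n_def by simp
  then have "0 \<le> ?e"
    using \<open>1 \<le> n\<close> by (simp add: zero_le_mult_iff)
  have "0 \<le> real p / (2 * real n)" "0 \<le> real k / (4 * real n)"
    by simp_all
  then have "?e \<le> 1"
    by linarith
  have "real (card ?S) \<le> 8 ^ n * real n powr (real n * ?e)"
    unfolding exponent unfolding n_def p_def
    by (rule card_preserving_involutions_le[OF P \<open>finite A\<close> \<open>A \<noteq> {}\<close> small])
  also have "\<dots> \<le> 8 ^ n * (exp (real n) * fact n powr ?e)"
    using powr_mult_le_exp_fact[OF \<open>0 \<le> ?e\<close> \<open>?e \<le> 1\<close>] by (intro mult_left_mono) auto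
  also have "\<dots> = (8 * exp 1) ^ n * fact n powr ?e"
    using exp_of_nat_mult[of n "1::real"] by (simp add: power_mult_distrib)
  finally show ?thesis .
qed

theorem lemma5p2:
  "\<exists>C::real. C > 0 \<and>
    (\<forall>m k P. m \<ge> 1 \<longrightarrow> k \<le> m \<longrightarrow> P \<in> partitions_le2 m \<longrightarrow>
      real (N1 k P m) \<le> C ^ m * (fact m) powr
        (1/2 - real (pi2 P) / (2 * real m) - real k / (4 * real m)))"
proof (intro exI[of _ "8 * exp 1"] conjI allI impI)
  fix m k P assume "1 \<le> m" "k \<le> m" "P \<in> partitions_le2 m"
  then have "partition_on {1..m} P" "\<forall>B\<in>P. card B \<le> 2" "{1..m} \<noteq> {}" "k \<le> card {1..m}"
    unfolding partitions_le2_def by auto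
  from card_preserving_involutions_le_fact[OF this(1) _ this(3,2,4)]
  show "real (N1 k P m) \<le> (8 * exp 1) ^ m * fact m powr
      (1/2 - real (pi2 P) / (2 * real m) - real k / (4 * real m))"
    unfolding N1_def pi2_def by simp
qed simp

end
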